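(* Let $f\in\mathscr{C}^1(\mathbb{R},\mathbb{R})$ and $n\ge 2$. Then \[ \mathbb{E}[f'(Z_n)] = K_n\,\mathbb{E}\big[e^{-\beta_n Z_{n-1}}\,f'\big(\alpha_n Z_{n-1}+G_n+\delta_n\big)\big], \] where $G_n$ has the distribution $n^{-1}\operatorname{Geom}(1/n)$ and is independent of $Z_{n-1}$.
   Context: For $m\ge1$, $Z_m=\frac{T_m}{m}-\log m$, where $T_m=\sum_{i=1}^m\tau_i^m$ with $\tau_1^m,\dots,\tau_m^m$ independent and $\tau_i^m\sim\operatorname{Geom}\big(\frac{m-i+1}{m}\big)$ ($T_m$ is the coupon collector's completion time for $m$ coupons). $\operatorname{Geom}(p)$, $p\in(0,1]$, is the geometric law on $\{1,2,\dots\}$: $P(k)=p(1-p)^{k-1}$. Constants: $\alpha_n=1-\frac1n$, $\beta_n=-(n-1)\log\alpha_n$, $K_n=n\big(1-\frac1n\big)^{(n-1)\log(n-1)}$, $\delta_n=\log\big(1-\frac1n\big)-\frac1n\log(n-1)$. *)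

theory Defs
  imports "HOL-Probability.Probability"
begin

text \<open>Geom(p) on {1,2,...}: P(k) = p (1-p)^(k-1), as the library's geometric
  distribution on {0,1,...} shifted by one.\<close>
definition geom1_pmf :: "real \<Rightarrow> nat pmf" where
  "geom1_pmf p = map_pmf Suc (geometric_pmf p)"

text \<open>Partial sums tau_1^m + ... + tau_k^m of independent
  tau_i^m ~ Geom((m-i+1)/m).\<close>
primrec coupon_partial_pmf :: "nat \<Rightarrow> nat \<Rightarrow> nat pmf" where
  "coupon_partial_pmf m 0 = return_pmf 0"
| "coupon_partial_pmf m (Suc k) =
     bind_pmf (coupon_partial_pmf m k)
       (\<lambda>t. map_pmf (\<lambda>x. t + x) (geom1_pmf ((real m - real (Suc k) + 1) / real m)))"

definition T_pmf :: "nat \<Rightarrow> nat pmf" where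
  "T_pmf m = coupon_partial_pmf m m"

definition Z_pmf :: "nat \<Rightarrow> real pmf" where
  "Z_pmf m = map_pmf (\<lambda>t. real t / real m - ln (real m)) (T_pmf m)"

definition G_pmf :: "nat \<Rightarrow> real pmf" where
  "G_pmf n = map_pmf (\<lambda>k. real k / real n) (geom1_pmf (1 / real n))"

definition alpha_n :: "nat \<Rightarrow> real" where
  "alpha_n n = 1 - 1 / real n"

definition beta_n :: "nat \<Rightarrow> real" where
  "beta_n n = - (real n - 1) * ln (alpha_n n)"

definition K_n :: "nat \<Rightarrow> real" where
  "K_n n = real n * (1 - 1 / real n) powr ((real n - 1) * ln (real n - 1))"

definition delta_n :: "nat \<Rightarrow> real" where
  "delta_n n = ln (1 - 1 / real n) - (1 / real n) * ln (real n - 1)"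

end

(* Among the n coupons, the first n - 1 waiting times tau_i^n ~ Geom((n-i+1)/n) become,
   after tilting each by (1 - 1/n)^tau, exactly the waiting times tau_i^(n-1) of the
   (n-1)-coupon collector; the normalising constants (n-i+1)/(n-i) telescope to n.
   Hence the law of T_n is the law of T_(n-1) + tau_n^n, with tau_n^n ~ Geom(1/n)
   independent, reweighted by n (1 - 1/n)^T_(n-1).  Written in terms of
   Z_(n-1) = T_(n-1)/(n-1) - log (n-1), this weight is K_n exp(-beta_n Z_(n-1)) and
   T_n/n - log n is alpha_n Z_(n-1) + G_n + delta_n. *)

theory Submission
  imports Defs
begin

lemma pmf_geom1_pmf:
  assumes "0 < p" "p \<le> 1"
  shows "pmf (geom1_pmf p) j = (if j = 0 then 0 else (1 - p) ^ (j - 1) * p)"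
proof (cases j)
  case 0
  have "0 \<notin> set_pmf (geom1_pmf p)" unfolding geom1_pmf_def by auto
  with 0 show ?thesis by (simp add: set_pmf_eq)
next
  case (Suc i)
  have "pmf (geom1_pmf p) (Suc i) = pmf (geometric_pmf p) i"
    unfolding geom1_pmf_def by (rule pmf_map_inj') (simp add: inj_def)
  with Suc assms show ?thesis by simp
qed

lemma pmf_geom1_pmf_tilt:
  assumes "0 < p" "p \<le> 1" "0 < p'" "p' \<le> 1" "0 < c" "1 - p = c * (1 - p')"
  shows "pmf (geom1_pmf p) j = pmf (geom1_pmf p') j * c ^ j * (p / (c * p'))"
proof (cases j)
  case (Suc i)
  have "(1 - p) ^ i = c ^ i * (1 - p') ^ i"
    by (simp add: assms(6) power_mult_distrib)
  then have "(1 - p) ^ i * p = (1 - p') ^ i * p' * c ^ Suc i * (p / (c * p'))"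
    using assms(3,5) by (simp add: field_simps)
  with Suc assms show ?thesis by (simp add: pmf_geom1_pmf)
qed (use assms in \<open>simp add: pmf_geom1_pmf\<close>)

lemma pmf_map_pmf_add_nat:
  "pmf (map_pmf (\<lambda>x. s + x) (Q :: nat pmf)) t = (if s \<le> t then pmf Q (t - s) else 0)"
proof (cases "s \<le> t")
  case True
  then have "pmf (map_pmf (\<lambda>x. s + x) Q) (s + (t - s)) = pmf Q (t - s)"
    by (intro pmf_map_inj') (simp add: inj_def)
  with True show ?thesis by simp
next
  case False
  then have "t \<notin> set_pmf (map_pmf (\<lambda>x. s + x) Q)" by auto
  with False show ?thesis by (simp add: set_pmf_eq)
qed

lemma pmf_coupon_partial_pmf_Suc:
  "pmf (coupon_partial_pmf m (Suc k)) t =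
    (\<Sum>s\<le>t. pmf (coupon_partial_pmf m k) s *
        pmf (geom1_pmf ((real m - real (Suc k) + 1) / real m)) (t - s))"
proof -
  let ?G = "geom1_pmf ((real m - real (Suc k) + 1) / real m)"
  have "pmf (coupon_partial_pmf m (Suc k)) t =
      (\<integral>s. pmf (map_pmf (\<lambda>x. s + x) ?G) t \<partial>measure_pmf (coupon_partial_pmf m k))"
    by (simp add: pmf_bind)
  also have "\<dots> = (\<Sum>s\<le>t. pmf (map_pmf (\<lambda>x. s + x) ?G) t * pmf (coupon_partial_pmf m k) s)"
    by (rule integral_measure_pmf_real) (auto simp: pmf_map_pmf_add_nat split: if_splits)
  also have "\<dots> = (\<Sum>s\<le>t. pmf (coupon_partial_pmf m k) s * pmf ?G (t - s))"
    by (intro sum.cong) (auto simp: pmf_map_pmf_add_nat)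
  finally show ?thesis .
qed

lemma pmf_geom1_pmf_coupon_step_tilt:
  assumes "Suc k \<le> m"
  shows "pmf (geom1_pmf ((real (Suc m) - real (Suc k) + 1) / real (Suc m))) j =
    pmf (geom1_pmf ((real m - real (Suc k) + 1) / real m)) j * (real m / real (Suc m)) ^ j *
      ((real (Suc m) - real k) / (real m - real k))"
proof -
  let ?p = "(real (Suc m) - real (Suc k) + 1) / real (Suc m)"
  let ?p' = "(real m - real (Suc k) + 1) / real m"
  let ?c = "real m / real (Suc m)"
  have km: "real k + 1 \<le> real m" using assms by linarith
  have "pmf (geom1_pmf ?p) j = pmf (geom1_pmf ?p') j * ?c ^ j * (?p / (?c * ?p'))"
    using km by (intro pmf_geom1_pmf_tilt) (auto simp: field_simps)
  also have "?p / (?c * ?p') = (real (Suc m) - real k) / (real m - real k)"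
    using km by (simp add: divide_simps add_diff_eq diff_add_eq)
  finally show ?thesis .
qed

lemma pmf_coupon_partial_pmf_Suc_tilt:
  assumes "k \<le> m"
  shows "pmf (coupon_partial_pmf (Suc m) k) t =
    pmf (coupon_partial_pmf m k) t * (real m / real (Suc m)) ^ t *
      (real (Suc m) / (real (Suc m) - real k))"
  using assms
proof (induction k arbitrary: t)
  case 0
  then show ?case by (cases t) (simp_all add: indicator_def)
next
  case (Suc k)
  let ?c = "real m / real (Suc m)"
  let ?r = "\<lambda>k. real (Suc m) / (real (Suc m) - real k)"
  let ?G = "geom1_pmf ((real (Suc m) - real (Suc k) + 1) / real (Suc m))"
  let ?H = "geom1_pmf ((real m - real (Suc k) + 1) / real m)"
  have G: "pmf ?G j = pmf ?H j * ?c ^ j * ((real (Suc m) - real k) / (real m - real k))" for j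
    using Suc.prems by (rule pmf_geom1_pmf_coupon_step_tilt)
  have r: "?r k * ((real (Suc m) - real k) / (real m - real k)) = ?r (Suc k)"
  proof -
    have "real (Suc m) - real k \<noteq> 0" "real (Suc m) - real (Suc k) = real m - real k"
      using Suc.prems by simp_all
    then show ?thesis by simp
  qed
  have "pmf (coupon_partial_pmf (Suc m) (Suc k)) t =
      (\<Sum>s\<le>t. pmf (coupon_partial_pmf (Suc m) k) s * pmf ?G (t - s))"
    by (rule pmf_coupon_partial_pmf_Suc)
  also have "\<dots> = (\<Sum>s\<le>t. pmf (coupon_partial_pmf m k) s * pmf ?H (t - s) * ?c ^ t * ?r (Suc k))"
  proof (intro sum.cong refl)
    fix s assume "s \<in> {..t}"
    then have "?c ^ t = ?c ^ s * ?c ^ (t - s)" by (simp flip: power_add)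
    then show "pmf (coupon_partial_pmf (Suc m) k) s * pmf ?G (t - s) =
        pmf (coupon_partial_pmf m k) s * pmf ?H (t - s) * ?c ^ t * ?r (Suc k)"
      using Suc.prems by (simp only: Suc.IH G flip: r) (simp add: mult_ac)
  qed
  also have "\<dots> = pmf (coupon_partial_pmf m (Suc k)) t * ?c ^ t * ?r (Suc k)"
    by (simp only: pmf_coupon_partial_pmf_Suc[of m] sum_distrib_right)
  finally show ?case .
qed

lemma pmf_T_pmf_Suc:
  "pmf (T_pmf (Suc m)) t =
    (\<Sum>s\<le>t. pmf (T_pmf m) s * pmf (geom1_pmf (1 / real (Suc m))) (t - s) *
      (real (Suc m) * (real m / real (Suc m)) ^ s))"
proof -
  have "pmf (T_pmf (Suc m)) t =
      (\<Sum>s\<le>t. pmf (coupon_partial_pmf (Suc m) m) s * pmf (geom1_pmf (1 / real (Suc m))) (t - s))"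
    unfolding T_pmf_def pmf_coupon_partial_pmf_Suc by simp
  then show ?thesis
    unfolding pmf_coupon_partial_pmf_Suc_tilt[OF order.refl] T_pmf_def by (simp add: mult_ac)
qed

lemma measure_pmf_eq_distr_density_convolution:
  fixes A B C :: "nat pmf" and w :: "nat \<Rightarrow> real"
  assumes w_nonneg: "\<And>s. 0 \<le> w s"
    and pmf_C: "\<And>t. pmf C t = (\<Sum>s\<le>t. pmf A s * pmf B (t - s) * w s)"
  shows "measure_pmf C =
    distr (density (pair_pmf A B) (\<lambda>x. ennreal (w (fst x)))) (count_space UNIV) (\<lambda>(s, g). s + g)"
    (is "_ = distr (density _ ?w) _ ?add")
proof (rule measure_eqI_countable[where A = UNIV])
  fix t :: nat
  have "emeasure (distr (density (pair_pmf A B) ?w) (count_space UNIV) ?add) {t}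
      = (\<integral>\<^sup>+ x. ?w x * indicator (?add -` {t}) x \<partial>pair_pmf A B)"
    by (simp add: emeasure_distr emeasure_density)
  also have "\<dots> = (\<Sum>x\<in>(\<lambda>s. (s, t - s)) ` {..t}.
      ?w x * indicator (?add -` {t}) x * pmf (pair_pmf A B) x)"
    by (rule nn_integral_measure_pmf_support) (auto simp: indicator_def image_iff)
  also have "\<dots> = (\<Sum>s\<le>t. ennreal (pmf A s * pmf B (t - s) * w s))"
    using w_nonneg
    by (subst sum.reindex) (auto simp: inj_on_def pmf_pair ennreal_mult' mult_ac intro!: sum.cong)
  also have "\<dots> = emeasure (measure_pmf C) {t}"
    using w_nonneg by (simp add: pmf_C emeasure_pmf_single)
  finally show "emeasure (measure_pmf C) {t} =
      emeasure (distr (density (pair_pmf A B) ?w) (count_space UNIV) ?add) {t}" ..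
qed auto

lemma one_minus_inverse_Suc: "1 - 1 / real (Suc m) = real m / real (Suc m)"
  by (simp add: field_simps)

lemma K_n_mult_exp_beta_n:
  assumes "0 < m"
  shows "K_n (Suc m) * exp (- beta_n (Suc m) * (real s / real m - ln (real m))) =
    real (Suc m) * (real m / real (Suc m)) ^ s"
proof -
  define l where "l = ln (real m / real (Suc m))"
  have K: "K_n (Suc m) = real (Suc m) * exp (real m * ln (real m) * l)"
    using assms unfolding K_n_def one_minus_inverse_Suc l_def powr_def by (simp add: mult_ac)
  have beta: "- beta_n (Suc m) * (real s / real m - ln (real m)) =
      real s * l - real m * ln (real m) * l"
    using assms unfolding beta_n_def alpha_n_def one_minus_inverse_Suc l_def
    by (simp add: field_simps)
  have "K_n (Suc m) * exp (- beta_n (Suc m) * (real s / real m - ln (real m))) =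
      real (Suc m) * exp (real s * l)"
    unfolding K beta by (simp add: mult.assoc flip: exp_add)
  also have "\<dots> = real (Suc m) * (real m / real (Suc m)) ^ s"
    using assms by (simp add: l_def exp_of_nat_mult)
  finally show ?thesis .
qed

lemma alpha_n_mult_add_delta_n:
  assumes "0 < m"
  shows "alpha_n (Suc m) * (real s / real m - ln (real m)) + real g / real (Suc m) + delta_n (Suc m) =
    real (s + g) / real (Suc m) - ln (real (Suc m))"
proof -
  have affine:
    "x / (x + 1) * (a / x - L) + b / (x + 1) + (L - L' - L / (x + 1)) = (a + b) / (x + 1) - L'"
    if "0 < x" for x a b L L' :: real
  proof -
    have "x \<noteq> 0" "x + 1 \<noteq> 0" using that by simp_all
    then show ?thesis by (simp add: divide_simps) (simp add: algebra_simps)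
  qed
  have delta: "delta_n (Suc m) = ln (real m) - ln (real (Suc m)) - ln (real m) / real (Suc m)"
    using assms unfolding delta_n_def one_minus_inverse_Suc by (simp add: ln_div)
  show ?thesis
    unfolding alpha_n_def one_minus_inverse_Suc delta
    using affine[where x = "real m" and a = "real s" and b = "real g" and L = "ln (real m)"] assms
    by (simp add: add.commute)
qed

lemma expectation_Z_pmf_Suc:
  fixes h :: "real \<Rightarrow> real"
  assumes "0 < m"
  shows "measure_pmf.expectation (Z_pmf (Suc m)) h =
    K_n (Suc m) * measure_pmf.expectation (pair_pmf (Z_pmf m) (G_pmf (Suc m)))
      (\<lambda>(z, g). exp (- beta_n (Suc m) * z) * h (alpha_n (Suc m) * z + g + delta_n (Suc m)))"
proof -
  let ?M = "pair_pmf (T_pmf m) (geom1_pmf (1 / real (Suc m)))"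
  let ?w = "\<lambda>s. real (Suc m) * (real m / real (Suc m)) ^ s"
  let ?z = "\<lambda>s. real s / real m - ln (real m)"
  have T: "measure_pmf (T_pmf (Suc m)) =
      distr (density ?M (\<lambda>x. ennreal (?w (fst x)))) (count_space UNIV) (\<lambda>(s, g). s + g)"
    by (rule measure_pmf_eq_distr_density_convolution) (simp_all add: pmf_T_pmf_Suc)
  have "measure_pmf.expectation (Z_pmf (Suc m)) h =
      measure_pmf.expectation (T_pmf (Suc m)) (\<lambda>t. h (real t / real (Suc m) - ln (real (Suc m))))"
    unfolding Z_pmf_def by simp
  also have "\<dots> = measure_pmf.expectation ?M
      (\<lambda>(s, g). ?w s * h (real (s + g) / real (Suc m) - ln (real (Suc m))))"
    unfolding T by (simp add: integral_distr integral_density split_beta')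
  also have "\<dots> = measure_pmf.expectation ?M
      (\<lambda>(s, g). K_n (Suc m) * exp (- beta_n (Suc m) * ?z s) *
        h (alpha_n (Suc m) * ?z s + real g / real (Suc m) + delta_n (Suc m)))"
    by (simp only: K_n_mult_exp_beta_n[OF assms] alpha_n_mult_add_delta_n[OF assms])
  also have "\<dots> = K_n (Suc m) * measure_pmf.expectation (pair_pmf (Z_pmf m) (G_pmf (Suc m)))
      (\<lambda>(z, g). exp (- beta_n (Suc m) * z) * h (alpha_n (Suc m) * z + g + delta_n (Suc m)))"
    unfolding Z_pmf_def G_pmf_def map_pair [symmetric] by (simp add: split_beta' mult.assoc)
  finally show ?thesis .
qed

theorem lemma3p3:
  fixes f :: "real \<Rightarrow> real" and n :: nat
  assumes "f C1_differentiable_on UNIV"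
    and "n \<ge> 2"
  shows "measure_pmf.expectation (Z_pmf n) (\<lambda>z. deriv f z) =
         K_n n * measure_pmf.expectation (pair_pmf (Z_pmf (n - 1)) (G_pmf n))
           (\<lambda>(z, g). exp (- beta_n n * z) * deriv f (alpha_n n * z + g + delta_n n))"
proof -
  obtain m where "n = Suc m" "0 < m" using assms(2) by (intro that[of "n - 1"]) auto
  then show ?thesis using expectation_Z_pmf_Suc[of m "deriv f"] by simp
qed

end
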